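(* For $m\geq1$ let $T_m$ denote the number of integer sequences $(d_1,\ldots,d_m)$ such that $d_j\in\{1,-3,-4,-5,\ldots\}$ for all $1\leq j\leq m$, $\sum_{j=1}^k d_j\geq 1$ for all $1\leq k\leq m$, and $\sum_{j=1}^m d_j=1$. Then $T_{2M}=o(5^M)$ as $M\to\infty$. *)

theory Defs
  imports "HOL-Analysis.Analysis" "HOL-Library.Landau_Symbols"
begin

definition allowed_step :: "int \<Rightarrow> bool" where
  "allowed_step d \<longleftrightarrow> d = 1 \<or> d \<le> -3"

definition T_seqs :: "nat \<Rightarrow> int list set" where
  "T_seqs m = {ds. length ds = m \<and> (\<forall>d\<in>set ds. allowed_step d)
      \<and> (\<forall>k\<in>{1..m}. sum_list (take k ds) \<ge> 1) \<and> sum_list ds = 1}"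

definition T :: "nat \<Rightarrow> nat" where
  "T m = card (T_seqs m)"

end

theory Submission
  imports Defs
begin

(* Fix a weight x > 1.  Every sequence counted by
   T m has total sum 1, so it contributes 1 \<le> x = x^(d_1 + ... + d_m) = x^d_1 * ... * x^d_m.
   The prefix condition forces every step to be at least -m, so all these sequences use
   steps from the finite set S_m = {1} \<union> {-m..-3}; summing the product weight over ALL
   length-m words over S_m factorises as (\<Sum>s\<in>S_m. x^s)^m.  The step generating sum is at
   most x + 1/(x^2 (x-1)) by a geometric tail estimate, and at x = 7/4 this is
   c = 7/4 + 64/147, whose square is about 4.78 < 5.  Hence T(2M) \<le> (c^2)^M = o(5^M). *)

lemma sum_prod_list_words:
  fixes f :: "'a \<Rightarrow> 'b::comm_semiring_1"
  assumes "finite A"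
  shows "(\<Sum>xs\<in>{xs. set xs \<subseteq> A \<and> length xs = n}. prod_list (map f xs)) = sum f A ^ n"
proof (induction n)
  case 0
  have "{xs. set xs \<subseteq> A \<and> length xs = 0} = {[]}" by auto
  then show ?case by simp
next
  case (Suc n)
  let ?W = "{xs. set xs \<subseteq> A \<and> length xs = n}"
  have "(\<Sum>xs\<in>{xs. set xs \<subseteq> A \<and> length xs = Suc n}. prod_list (map f xs))
        = (\<Sum>(xs, a)\<in>?W \<times> A. f a * prod_list (map f xs))"
    unfolding lists_length_Suc_eq
    by (subst sum.reindex) (auto simp: inj_on_def case_prod_unfold)
  also have "\<dots> = (\<Sum>xs\<in>?W. \<Sum>a\<in>A. prod_list (map f xs) * f a)"
    by (simp add: sum.cartesian_product mult.commute)
  also have "\<dots> = (\<Sum>xs\<in>?W. prod_list (map f xs)) * sum f A"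
    by (simp add: sum_product)
  finally show ?case using Suc by (simp add: mult.commute)
qed

lemma geometric_tail_bound:
  fixes q :: real
  assumes "0 \<le> q" "q < 1"
  shows "(\<Sum>j=k..n. q ^ j) \<le> q ^ k / (1 - q)"
proof (cases "n < k")
  case True
  then show ?thesis using assms by simp
next
  case False
  then have "(\<Sum>j=k..n. q ^ j) = (q ^ k - q ^ Suc n) / (1 - q)"
    using assms by (simp add: sum_gp)
  also have "\<dots> \<le> q ^ k / (1 - q)"
    using assms by (intro divide_right_mono) auto
  finally show ?thesis .
qed

lemma exponentially_dominated_smallo:
  fixes f :: "nat \<Rightarrow> real" and a b :: real
  assumes bound: "\<And>M. \<bar>f M\<bar> \<le> a ^ M" and "0 \<le> a" "a < b"
  shows "f \<in> o[sequentially](\<lambda>M. b ^ M)"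
proof (rule landau_o.big_small_trans)
  show "f \<in> O[sequentially](\<lambda>M. a ^ M)"
    using bound \<open>0 \<le> a\<close> by (intro bigoI[where c = 1]) auto
  have "(\<lambda>M. (a / b) ^ M) \<longlonglongrightarrow> 0"
    using assms by (intro LIMSEQ_power_zero) simp
  then show "(\<lambda>M. a ^ M) \<in> o[sequentially](\<lambda>M. b ^ M)"
    using assms by (intro smalloI_tendsto) (auto simp: power_divide)
qed

text \<open>The prefix condition bounds every step from below: the step at position \<open>i\<close> follows a
  prefix sum of at most \<open>i\<close> (steps are at most 1) and leads to a sum of at least 1.  Hence a
  counted sequence is a word over the finite alphabet \<open>{1} \<union> {-m..-3}\<close>.\<close>
lemma T_seqs_subset_words:
  "T_seqs m \<subseteq> {ds. set ds \<subseteq> insert 1 {-int m..-3} \<and> length ds = m}"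
proof
  fix ds assume "ds \<in> T_seqs m"
  then have len: "length ds = m" and steps: "\<forall>d\<in>set ds. allowed_step d"
    and prefix: "\<forall>k\<in>{1..m}. sum_list (take k ds) \<ge> 1"
    by (auto simp: T_seqs_def)
  have "d \<in> insert 1 {-int m..-3}" if "d \<in> set ds" for d
  proof -
    obtain i where i: "i < m" "ds ! i = d"
      using \<open>d \<in> set ds\<close> len by (auto simp: in_set_conv_nth)
    have "\<forall>e\<in>set (take i ds). e \<le> 1"
      using steps by (fastforce simp: allowed_step_def dest: in_set_takeD)
    then have "sum_list (take i ds) \<le> int i"
      using sum_list_mono[of "take i ds" "\<lambda>e. e" "\<lambda>_. 1"] i len by (simp add: sum_list_triv)
    moreover have "take (Suc i) ds = take i ds @ [d]"
      using i len by (simp add: take_Suc_conv_app_nth)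
    then have "sum_list (take i ds) + d \<ge> 1"
      using prefix[rule_format, of "Suc i"] i by simp
    ultimately show ?thesis
      using steps \<open>d \<in> set ds\<close> i by (auto simp: allowed_step_def)
  qed
  then show "ds \<in> {ds. set ds \<subseteq> insert 1 {-int m..-3} \<and> length ds = m}"
    using len by blast
qed

lemma T_weighted_bound:
  fixes x :: real
  assumes "1 \<le> x"
  shows "real (T m) \<le> (\<Sum>s\<in>insert 1 {-int m..-3}. x powi s) ^ m"
proof -
  define S where "S = insert 1 {-int m..-3}"
  define W where "W = {ds. set ds \<subseteq> S \<and> length ds = m}"
  have "finite S" by (simp add: S_def)
  then have "finite W" by (simp add: W_def finite_lists_length_eq)
  have weight: "x powi sum_list ds = prod_list (map (\<lambda>d. x powi d) ds)" for ds
    using assms by (induction ds) (auto simp: power_int_add)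
  have "real (T m) = (\<Sum>ds\<in>T_seqs m. 1)" by (simp add: T_def)
  also have "\<dots> \<le> (\<Sum>ds\<in>T_seqs m. x powi sum_list ds)"
    using assms by (intro sum_mono) (auto simp: T_seqs_def)
  also have "\<dots> \<le> (\<Sum>ds\<in>W. prod_list (map (\<lambda>d. x powi d) ds))"
    unfolding weight using T_seqs_subset_words assms \<open>finite W\<close>
    by (intro sum_mono2 prod_list_nonneg) (auto simp: W_def S_def)
  also have "\<dots> = (\<Sum>s\<in>S. x powi s) ^ m"
    unfolding W_def by (rule sum_prod_list_words[OF \<open>finite S\<close>])
  finally show ?thesis by (simp add: S_def)
qed

text \<open>The weighted size of the step alphabet is bounded uniformly in \<open>m\<close>:
  the negative steps contribute a geometric tail \<open>\<Sum>j\<ge>3. x^-j\<close>.\<close>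
lemma step_weight_bound:
  fixes x :: real
  assumes "1 < x"
  shows "(\<Sum>s\<in>insert 1 {-int m..-3}. x powi s) \<le> x + 1 / (x ^ 2 * (x - 1))"
proof -
  have negative_power: "x powi s = (1 / x) ^ nat (- s)" if "s \<le> 0" for s
  proof -
    have "s = - int (nat (- s))" using that by simp
    then have "x powi s = inverse (x ^ nat (- s))"
      by (metis power_int_minus power_int_of_nat)
    then show ?thesis by (simp add: power_one_over inverse_eq_divide)
  qed
  have "(\<Sum>s\<in>{-int m..-3}. x powi s) = (\<Sum>j=3..m. (1 / x) ^ j)"
    by (rule sum.reindex_bij_witness[of _ "\<lambda>j. - int j" "\<lambda>s. nat (- s)"])
       (auto simp: negative_power)
  also have "\<dots> \<le> (1 / x) ^ 3 / (1 - 1 / x)"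
    using assms by (intro geometric_tail_bound) auto
  also have "\<dots> = 1 / (x ^ 2 * (x - 1))"
    using assms by (simp add: field_simps power3_eq_cube power2_eq_square)
  finally show ?thesis by (simp add: sum.insert)
qed

lemma T_exponential_bound: "real (T m) \<le> (7/4 + 64/147) ^ m"
proof -
  have "real (T m) \<le> (\<Sum>s\<in>insert 1 {-int m..-3}. (7/4::real) powi s) ^ m"
    by (rule T_weighted_bound) simp
  also have "\<dots> \<le> (7/4 + 64/147) ^ m"
    using step_weight_bound[of "7/4" m]
    by (intro power_mono sum_nonneg) (auto simp: power2_eq_square)
  finally show ?thesis .
qed

theorem mainTheorem4:
  shows "(\<lambda>M::nat. real (T (2 * M))) \<in> o[sequentially](\<lambda>M. 5 ^ M)"
proof (rule exponentially_dominated_smallo)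
  fix M :: nat
  show "\<bar>real (T (2 * M))\<bar> \<le> ((7/4 + 64/147) ^ 2) ^ M"
    using T_exponential_bound[of "2 * M"] by (simp add: power_mult)
qed (simp_all add: power2_eq_square)

end
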